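(* Let $\sigma=(k_1,\ldots,k_\ell)$ be a tuple of positive integers with $\ell\ge 2$ and $K=\sum_{i=1}^\ell k_i\ge 2$. Let $C_\sigma=\sum_{j=0}^{\ell-1}3^{\ell-1-j}2^{k_1+\cdots+k_j}$ and $\rho=C_\sigma/(2^K-3^\ell)\in\mathbb Z_2$. Define $x_0=\rho$ and $x_j=T(x_{j-1})$ for $j\ge 1$, where $T(x)=(3x+1)/2^{v_2(3x+1)}$ on $2$-adic integers $x$ with $3x+1\neq 0$. Then $v_2(3x_{j-1}+1)=k_j$ for each $j=1,\ldots,\ell$ (i.e. $\sigma$ is a phantom family: the $2$-adic root $\rho$ realizes the valuation pattern $\sigma$).
   Context: $\mathbb Z_2$ is the ring of $2$-adic integers; $2^K-3^\ell$ is odd, hence a unit in $\mathbb Z_2$. $v_2$ is the $2$-adic valuation on $\mathbb Z_2$; the empty sum $k_1+\cdots+k_0$ is $0$. *)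

theory Defs
  imports "HOL-Computational_Algebra.Computational_Algebra"
begin

text \<open>2-adic integers that are rational: the local ring Z_(2) of rationals with odd
  denominator, which embeds into Z_2 preserving the 2-adic valuation.  All objects in the
  statement (rho and its T-orbit) live in this subring.\<close>

definition Z2loc :: "rat set" where
  "Z2loc = {x. odd (snd (quotient_of x))}"

text \<open>2-adic valuation of a rational (value at 0 is irrelevant, set to 0).\<close>
definition v2 :: "rat \<Rightarrow> int" where
  "v2 x = (let (a, b) = quotient_of x in
             int (multiplicity (2::int) a) - int (multiplicity (2::int) b))"

definition T :: "rat \<Rightarrow> rat" where
  "T x = (3 * x + 1) / 2 powi v2 (3 * x + 1)"

definition C_sigma :: "nat list \<Rightarrow> int" where
  "C_sigma ks = (\<Sum>j<length ks. 3 ^ (length ks - 1 - j) * 2 ^ sum_list (take j ks))"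

definition rho :: "nat list \<Rightarrow> rat" where
  "rho ks = of_int (C_sigma ks) / of_int (2 ^ sum_list ks - 3 ^ length ks)"

end

theory Submission
  imports Defs
begin

text \<open>The \<open>T\<close>-orbit of \<open>\<rho>(\<sigma>)\<close> runs through the values of \<open>\<rho>\<close> at the cyclic rotations of
  \<open>\<sigma>\<close>.  The denominator \<open>D = 2^K - 3^\<ell>\<close> is odd and the same for all rotations.  From
  \<open>C(k#s) = 3^|s| + 2^k C(s)\<close> and \<open>C(s@[k]) = 3 C(s) + 2^(\<Sum>s)\<close> one gets the cycle identity
  \<open>3 C(k#s) + D = 2^k C(s@[k])\<close>, i.e. \<open>3 \<rho>(k#s) + 1 = 2^k \<rho>(s@[k])\<close>.  Since \<open>C\<close> is odd as
  soon as the first entry is positive, \<open>\<rho>(s@[k])\<close> is a quotient of two odd integers; hence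
  \<open>v\<^sub>2(3 \<rho>(k#s) + 1) = k\<close> and \<open>T(\<rho>(k#s)) = \<rho>(s@[k])\<close>.  So the \<open>j\<close>-th step sees the first
  entry of the \<open>(j-1)\<close>-th rotation of \<open>\<sigma>\<close>, which is \<open>k\<^sub>j\<close>.\<close>

lemma quotient_of_int_div_cross_eq:
  fixes a b p q :: int
  assumes "quotient_of (of_int a / of_int b) = (p, q)" "b \<noteq> 0"
  shows "p * b = a * q"
proof -
  have "q > 0" using assms(1) quotient_of_denom_pos by blast
  moreover have "(of_int p / of_int q :: rat) = of_int a / of_int b"
    using quotient_of_div[OF assms(1)] by simp
  ultimately have "(of_int (p * b) :: rat) = of_int (a * q)"
    using assms(2) by (simp add: field_simps)
  then show ?thesis by linarith
qed

lemma of_int_div_odd_in_Z2loc: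
  fixes a b :: int
  assumes "odd b"
  shows "(of_int a / of_int b :: rat) \<in> Z2loc"
proof -
  obtain p q where pq: "quotient_of (of_int a / of_int b) = (p, q)"
    by (cases "quotient_of (of_int a / of_int b :: rat)")
  have "p * b = a * q" using quotient_of_int_div_cross_eq[OF pq] assms by auto
  then have "q dvd p * b" by simp
  then have "q dvd b"
    using quotient_of_coprime[OF pq] by (meson coprime_commute coprime_dvd_mult_right_iff)
  then have "odd q" using assms by (meson dvd_trans)
  then show ?thesis unfolding Z2loc_def using pq by simp
qed

lemma v2_pow2_mult_odd_div_odd:
  fixes a b :: int
  assumes "odd a" "odd b"
  shows "v2 (2 ^ e * of_int a / of_int b) = int e"
proof -
  obtain p q where pq: "quotient_of (of_int (2 ^ e * a) / of_int b) = (p, q)"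
    by (cases "quotient_of (of_int (2 ^ e * a) / of_int b :: rat)")
  have q: "q > 0" using pq quotient_of_denom_pos by blast
  have a: "a \<noteq> 0" and b: "b \<noteq> 0" using assms by auto
  have eq: "p * b = 2 ^ e * a * q" using quotient_of_int_div_cross_eq[OF pq] assms(2) by auto
  then have "p \<noteq> 0" using a q by auto
  then have "multiplicity (2::int) (p * b) = multiplicity 2 p"
    using b assms(2) by (simp add: prime_elem_multiplicity_mult_distrib not_dvd_imp_multiplicity_0)
  moreover have "multiplicity (2::int) (2 ^ e * a * q) = e + multiplicity 2 q"
    using a q assms(1) by (simp add: prime_elem_multiplicity_mult_distrib not_dvd_imp_multiplicity_0)
  ultimately have "multiplicity (2::int) p = e + multiplicity 2 q"
    using eq by simp
  then show ?thesis using pq unfolding v2_def by simp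
qed

lemma C_sigma_Nil [simp]: "C_sigma [] = 0"
  by (simp add: C_sigma_def)

lemma C_sigma_Cons: "C_sigma (k # ks) = 3 ^ length ks + 2 ^ k * C_sigma ks"
proof -
  have "C_sigma (k # ks) = 3 ^ length ks
      + (\<Sum>j<length ks. 3 ^ (length ks - Suc j) * 2 ^ sum_list (take (Suc j) (k # ks)))"
    unfolding C_sigma_def by (simp add: sum.lessThan_Suc_shift del: sum.lessThan_Suc)
  also have "(\<Sum>j<length ks. 3 ^ (length ks - Suc j) * 2 ^ sum_list (take (Suc j) (k # ks)))
      = 2 ^ k * C_sigma ks"
    unfolding C_sigma_def sum_distrib_left by (intro sum.cong) (simp_all add: power_add)
  finally show ?thesis .
qed

lemma C_sigma_snoc: "C_sigma (ks @ [k]) = 3 * C_sigma ks + 2 ^ sum_list ks"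
  by (induction ks) (simp_all add: C_sigma_Cons algebra_simps power_add)

lemma odd_C_sigma:
  assumes "ks \<noteq> []" "hd ks > 0"
  shows "odd (C_sigma ks)"
  using assms by (cases ks) (simp_all add: C_sigma_Cons)

lemma C_sigma_cycle:
  "3 * C_sigma (k # ks) + (2 ^ sum_list (k # ks) - 3 ^ length (k # ks)) = 2 ^ k * C_sigma (ks @ [k])"
  by (simp add: C_sigma_Cons C_sigma_snoc algebra_simps power_add)

lemma odd_rho_denominator:
  assumes "sum_list ks > 0"
  shows "odd (2 ^ sum_list ks - 3 ^ length ks :: int)"
proof -
  have "even (2 ^ sum_list ks :: int)" using assms by simp
  then show ?thesis by simp
qed

lemma rho_cycle:
  assumes "sum_list (k # ks) > 0"
  shows "3 * rho (k # ks) + 1 = 2 ^ k * rho (ks @ [k])"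
proof -
  define D :: int where "D = 2 ^ sum_list (k # ks) - 3 ^ length (k # ks)"
  have "odd D" unfolding D_def by (rule odd_rho_denominator[OF assms])
  then have D: "of_int D \<noteq> (0::rat)" by auto
  have "3 * rho (k # ks) + 1 = of_int (3 * C_sigma (k # ks) + D) / of_int D"
    unfolding rho_def D_def[symmetric] using D by (simp add: field_simps)
  also have "\<dots> = 2 ^ k * (of_int (C_sigma (ks @ [k])) / of_int D)"
    unfolding D_def C_sigma_cycle by simp
  also have "\<dots> = 2 ^ k * rho (ks @ [k])"
    unfolding rho_def D_def by simp
  finally show ?thesis .
qed

lemma collatz_step_rho:
  assumes "xs \<noteq> []" "\<forall>k\<in>set xs. k > 0"
  shows "3 * rho xs + 1 \<noteq> 0"
    and "v2 (3 * rho xs + 1) = int (hd xs)"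
    and "T (rho xs) = rho (rotate1 xs)"
proof -
  obtain k ks where xs: "xs = k # ks" using assms(1) by (cases xs) auto
  define D :: int where "D = 2 ^ sum_list (ks @ [k]) - 3 ^ length (ks @ [k])"
  have k: "k > 0" using assms(2) xs by simp
  have "odd D" unfolding D_def using k by (intro odd_rho_denominator) simp
  have "odd (C_sigma (ks @ [k]))"
    using assms(2) xs by (intro odd_C_sigma) (auto simp: hd_append)
  have cycle: "3 * rho xs + 1 = 2 ^ k * rho (ks @ [k])"
    unfolding xs using k by (intro rho_cycle) simp
  also have "\<dots> = 2 ^ k * of_int (C_sigma (ks @ [k])) / of_int D"
    by (simp add: rho_def D_def)
  finally have odd_form: "3 * rho xs + 1 = 2 ^ k * of_int (C_sigma (ks @ [k])) / of_int D" .
  show "3 * rho xs + 1 \<noteq> 0"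
    unfolding odd_form using \<open>odd D\<close> \<open>odd (C_sigma (ks @ [k]))\<close> by auto
  show v2: "v2 (3 * rho xs + 1) = int (hd xs)"
    unfolding odd_form using v2_pow2_mult_odd_div_odd \<open>odd D\<close> \<open>odd (C_sigma (ks @ [k]))\<close> xs
    by simp
  show "T (rho xs) = rho (rotate1 xs)"
    unfolding T_def v2 unfolding cycle using xs by (simp add: power_int_of_nat)
qed

lemma funpow_T_rho:
  assumes "xs \<noteq> []" "\<forall>k\<in>set xs. k > 0"
  shows "(T ^^ j) (rho xs) = rho (rotate j xs)"
proof (induction j)
  case (Suc j)
  have "rotate j xs \<noteq> []" and "\<forall>k\<in>set (rotate j xs). k > 0" using assms by simp_all
  then show ?case using collatz_step_rho(3) Suc.IH by simp
qed simp

theorem mainTheorem9: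
  fixes ks :: "nat list"
  assumes "length ks \<ge> 2"
    and "\<forall>k\<in>set ks. k > 0"
    and "sum_list ks \<ge> 2"
  shows "rho ks \<in> Z2loc \<and>
    (\<forall>j\<in>{1..length ks}. 3 * (T ^^ (j - 1)) (rho ks) + 1 \<noteq> 0 \<and>
        v2 (3 * (T ^^ (j - 1)) (rho ks) + 1) = int (ks ! (j - 1)))"
proof -
  have ks: "ks \<noteq> []" using assms(1) by auto
  have "rho ks \<in> Z2loc"
    unfolding rho_def using assms(3) by (intro of_int_div_odd_in_Z2loc odd_rho_denominator) simp
  moreover have "3 * (T ^^ (j - 1)) (rho ks) + 1 \<noteq> 0 \<and>
      v2 (3 * (T ^^ (j - 1)) (rho ks) + 1) = int (ks ! (j - 1))"
    if "j \<in> {1..length ks}" for j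
  proof -
    have "j - 1 < length ks" using that by auto
    then have "hd (rotate (j - 1) ks) = ks ! (j - 1)"
      using ks by (simp add: hd_rotate_conv_nth)
    then show ?thesis
      unfolding funpow_T_rho[OF ks assms(2)] using collatz_step_rho[of "rotate (j - 1) ks"] ks assms(2)
      by simp
  qed
  ultimately show ?thesis by blast
qed

end
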